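(* Let $\mathcal{H}_\mathrm{S}\cong\mathbb{C}^d$ be a finite-dimensional quantum system and let $\mathcal{E}_1,\mathcal{E}_2$ be completely positive trace-preserving (CPT) maps on the operators on $\mathcal{H}_\mathrm{S}$. Let $\chi_1=\chi[\mathcal{E}_1]$ and $\chi_2=\chi[\mathcal{E}_2]$ be their Choi states, and let $E$ be an entanglement measure and $E^\sharp$ the corresponding entanglement of assistance (as defined in the context). If $$E^\sharp[\chi_1] < E[\chi_2],$$ then the dynamics $\mathcal{D}=(\mathcal{E}_1,\mathcal{E}_2)$ requires truly quantum memory; that is, there exist no Kraus decomposition $\{M_i\}$ of $\mathcal{E}_1$ (i.e. $\mathcal{E}_1[\rho]=\sum_i M_i\rho M_i^\dagger$ for all $\rho$) and CPT maps $\Phi_i$ on the operators on $\mathcal{H}_\mathrm{S}$ such that $\mathcal{E}_2[\rho]=\sum_i \Phi_i[M_i\rho M_i^\dagger]$ for all $\rho$.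
   Context: Choi state: let $\mathcal{H}_\mathrm{A}\cong\mathbb{C}^d$ be an ancilla, $\{\ket{j_\mathrm{S}}\}$, $\{\ket{j_\mathrm{A}}\}$ orthonormal bases, and $\ket{\phi^+}=\frac{1}{\sqrt d}\sum_{j=0}^{d-1}\ket{j_\mathrm{S}}\ket{j_\mathrm{A}}$. For a CPT map $\mathcal{E}$ on $\mathrm{S}$, its Choi state is $\chi[\mathcal{E}]=(\mathcal{E}\otimes\mathbb{1})(\ket{\phi^+}\bra{\phi^+})$, a state on $\mathcal{H}_\mathrm{S}\otimes\mathcal{H}_\mathrm{A}$. Entanglement measure: $E$ is an entanglement monotone on bipartite states of $\mathrm{S}\mathrm{A}$ (e.g. entanglement of formation or concurrence) whose value on a mixed state is the convex roof of its pure-state values, $E[\rho]=\min_{\{p_k,\ket{\varphi_k}\}}\sum_k p_kE[\ket{\varphi_k}]$ over all pure-state decompositions $\rho=\sum_k p_k\ket{\varphi_k}\bra{\varphi_k}$, and which does not increase under local CPT maps acting on $\mathrm{S}$. Entanglement of assistance: $E^\sharp[\chi]=\max_{\{p_k,\ket{\psi_k}\}}\sum_k p_kE[\ket{\psi_k}]$, the maximum over all pure-state decompositions $\chi=\sum_kp_k\ket{\psi_k}\bra{\psi_k}$. A dynamics $(\mathcal{E}_1,\mathcal{E}_2)$ is said to be realizable with classical memory iff there exist a Kraus decomposition $\{M_i\}$ of $\mathcal{E}_1$ and CPT maps $\Phi_i$ with $\mathcal{E}_2[\rho]=\sum_i\Phi_i[M_i\rho M_i^\dagger]$; otherwise it requires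 truly quantum memory. *)

theory Defs
  imports Complex_Main "HOL-Library.Extended_Real"
begin

text \<open>Operators on a finite-dimensional Hilbert space with orthonormal basis indexed
  by a finite type 'a are represented by their matrices 'a => 'a => complex.
  The system S has basis type 'n (so d = CARD('n)); the ancilla A also has basis
  type 'n; the joint system SA has basis type 'n * 'n.\<close>

type_synonym 'a op = "'a \<Rightarrow> 'a \<Rightarrow> complex"

definition mmul :: "'a::finite op \<Rightarrow> 'a op \<Rightarrow> 'a op" where
  "mmul A B = (\<lambda>i j. \<Sum>k\<in>UNIV. A i k * B k j)"

definition adj :: "'a op \<Rightarrow> 'a op" where
  "adj A = (\<lambda>i j. cnj (A j i))"

definition mtrace :: "'a::finite op \<Rightarrow> complex" where
  "mtrace A = (\<Sum>i\<in>UNIV. A i i)"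

definition psd_on :: "'a set \<Rightarrow> 'a op \<Rightarrow> bool" where
  "psd_on I A \<longleftrightarrow> (\<forall>v :: 'a \<Rightarrow> complex.
     Im (\<Sum>i\<in>I. \<Sum>j\<in>I. cnj (v i) * A i j * v j) = 0 \<and>
     Re (\<Sum>i\<in>I. \<Sum>j\<in>I. cnj (v i) * A i j * v j) \<ge> 0)"

definition psd :: "'a::finite op \<Rightarrow> bool" where
  "psd A \<longleftrightarrow> psd_on UNIV A"

definition density :: "'a::finite op \<Rightarrow> bool" where
  "density \<rho> \<longleftrightarrow> psd \<rho> \<and> mtrace \<rho> = 1"

text \<open>Local action (Lambda \<otimes> id) of a map on the first tensor factor of a bipartite operator.\<close>
definition loc :: "('a op \<Rightarrow> 'a op) \<Rightarrow> ('a \<times> 'b) op \<Rightarrow> ('a \<times> 'b) op" where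
  "loc \<Lambda> X = (\<lambda>(i, a) (j, b). \<Lambda> (\<lambda>i' j'. X (i', a) (j', b)) i j)"

definition clinear_map :: "('a op \<Rightarrow> 'b op) \<Rightarrow> bool" where
  "clinear_map \<Lambda> \<longleftrightarrow> (\<forall>c X Y. \<Lambda> (\<lambda>i j. c * X i j + Y i j) = (\<lambda>i j. c * \<Lambda> X i j + \<Lambda> Y i j))"

definition trace_preserving :: "('a::finite op \<Rightarrow> 'a op) \<Rightarrow> bool" where
  "trace_preserving \<Lambda> \<longleftrightarrow> (\<forall>X. mtrace (\<Lambda> X) = mtrace X)"

text \<open>Complete positivity: Lambda \<otimes> id_k is positive for every finite ancilla dimension k
  (ancilla basis {..<k} inside nat).\<close>
definition completely_positive :: "('a::finite op \<Rightarrow> 'a op) \<Rightarrow> bool" where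
  "completely_positive \<Lambda> \<longleftrightarrow> (\<forall>(k::nat) (X :: ('a \<times> nat) op).
     psd_on (UNIV \<times> {..<k}) X \<longrightarrow> psd_on (UNIV \<times> {..<k}) (loc \<Lambda> X))"

definition CPT :: "('a::finite op \<Rightarrow> 'a op) \<Rightarrow> bool" where
  "CPT \<Lambda> \<longleftrightarrow> clinear_map \<Lambda> \<and> completely_positive \<Lambda> \<and> trace_preserving \<Lambda>"

definition phi_plus :: "('a::finite \<times> 'a) \<Rightarrow> complex" where
  "phi_plus = (\<lambda>(j, a). if j = a then complex_of_real (1 / sqrt (real (card (UNIV :: 'a set)))) else 0)"

definition proj :: "('a \<Rightarrow> complex) \<Rightarrow> 'a op" where
  "proj \<psi> = (\<lambda>x y. \<psi> x * cnj (\<psi> y))"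

definition choi :: "('a::finite op \<Rightarrow> 'a op) \<Rightarrow> ('a \<times> 'a) op" where
  "choi \<E> = loc \<E> (proj phi_plus)"

definition unit_vec :: "('a::finite \<Rightarrow> complex) \<Rightarrow> bool" where
  "unit_vec \<psi> \<longleftrightarrow> (\<Sum>x\<in>UNIV. cmod (\<psi> x) ^ 2) = 1"

definition pure_decomp :: "'a::finite op \<Rightarrow> (real \<times> ('a \<Rightarrow> complex)) list \<Rightarrow> bool" where
  "pure_decomp \<rho> D \<longleftrightarrow>
     (\<forall>(p, \<psi>) \<in> set D. p \<ge> 0 \<and> unit_vec \<psi>) \<and>
     sum_list (map fst D) = 1 \<and>
     \<rho> = (\<lambda>x y. sum_list (map (\<lambda>(p, \<psi>). complex_of_real p * proj \<psi> x y) D))"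

definition avg_ent :: "('a op \<Rightarrow> real) \<Rightarrow> (real \<times> ('a \<Rightarrow> complex)) list \<Rightarrow> real" where
  "avg_ent E D = sum_list (map (\<lambda>(p, \<psi>). p * E (proj \<psi>)) D)"

text \<open>Entanglement measure on SA: convex roof of its pure-state values (a minimum),
  non-increasing under local CPT maps on S.\<close>
definition ent_measure :: "(('n::finite \<times> 'n) op \<Rightarrow> real) \<Rightarrow> bool" where
  "ent_measure E \<longleftrightarrow>
     (\<forall>\<rho>. density \<rho> \<longrightarrow>
        (\<exists>D. pure_decomp \<rho> D \<and> E \<rho> = avg_ent E D) \<and>
        (\<forall>D. pure_decomp \<rho> D \<longrightarrow> E \<rho> \<le> avg_ent E D)) \<and>
     (\<forall>\<rho> (\<Lambda> :: 'n op \<Rightarrow> 'n op). density \<rho> \<and> CPT \<Lambda> \<longrightarrow> E (loc \<Lambda> \<rho>) \<le> E \<rho>)"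

definition ent_assist :: "(('a::finite) op \<Rightarrow> real) \<Rightarrow> 'a op \<Rightarrow> ereal" where
  "ent_assist E \<chi> = (SUP D \<in> {D. pure_decomp \<chi> D}. ereal (avg_ent E D))"

definition sandwich :: "'a::finite op \<Rightarrow> 'a op \<Rightarrow> 'a op" where
  "sandwich M \<rho> = mmul (mmul M \<rho>) (adj M)"

definition kraus_decomp :: "('a::finite op \<Rightarrow> 'a op) \<Rightarrow> 'a op list \<Rightarrow> bool" where
  "kraus_decomp \<E> Ms \<longleftrightarrow>
     (\<forall>\<rho>. \<E> \<rho> = (\<lambda>x y. \<Sum>i<length Ms. sandwich (Ms ! i) \<rho> x y))"

definition classical_memory :: "('a::finite op \<Rightarrow> 'a op) \<Rightarrow> ('a op \<Rightarrow> 'a op) \<Rightarrow> bool" where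
  "classical_memory \<E>1 \<E>2 \<longleftrightarrow>
     (\<exists>Ms (\<Phi>s :: ('a op \<Rightarrow> 'a op) list).
        kraus_decomp \<E>1 Ms \<and> length \<Phi>s = length Ms \<and> (\<forall>\<Phi>\<in>set \<Phi>s. CPT \<Phi>) \<and>
        (\<forall>\<rho>. \<E>2 \<rho> = (\<lambda>x y. \<Sum>i<length Ms. (\<Phi>s ! i) (sandwich (Ms ! i) \<rho>) x y)))"

end

theory Submission
  imports Defs
begin

text \<open>Let \<open>M\<^sub>i\<close> be Kraus operators of \<open>\<E>1\<close> and write \<open>(M\<^sub>i \<otimes> 1) \<phi>\<^sup>+ = \<surd>p\<^sub>i \<psi>\<^sub>i\<close>
  with unit vectors \<open>\<psi>\<^sub>i\<close>. Then \<open>\<chi>\<^sub>1 = \<Sum>\<^sub>i p\<^sub>i |\<psi>\<^sub>i\<rangle>\<langle>\<psi>\<^sub>i|\<close> is a pure-state decomposition,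
  so \<open>E\<^sup>\<sharp>[\<chi>\<^sub>1] \<ge> \<Sum>\<^sub>i p\<^sub>i E[\<psi>\<^sub>i]\<close>. A classical memory makes
  \<open>\<chi>\<^sub>2 = \<Sum>\<^sub>i p\<^sub>i (\<Phi>\<^sub>i \<otimes> id)(|\<psi>\<^sub>i\<rangle>\<langle>\<psi>\<^sub>i|)\<close>, and convexity of the convex roof
  together with monotonicity of \<open>E\<close> under the local channels \<open>\<Phi>\<^sub>i\<close> gives
  \<open>E[\<chi>\<^sub>2] \<le> \<Sum>\<^sub>i p\<^sub>i E[\<psi>\<^sub>i] \<le> E\<^sup>\<sharp>[\<chi>\<^sub>1]\<close>.\<close>

lemma psd_on_proj: "psd_on I (proj \<psi>)"
proof -
  have "(\<Sum>i\<in>I. \<Sum>j\<in>I. cnj (v i) * proj \<psi> i j * v j)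
      = of_real ((cmod (\<Sum>i\<in>I. cnj (v i) * \<psi> i))\<^sup>2)" for v
  proof -
    have "cnj (\<Sum>i\<in>I. cnj (v i) * \<psi> i) = (\<Sum>i\<in>I. v i * cnj (\<psi> i))"
      by (simp add: cnj_sum)
    then have "(\<Sum>i\<in>I. \<Sum>j\<in>I. cnj (v i) * proj \<psi> i j * v j)
        = (\<Sum>i\<in>I. cnj (v i) * \<psi> i) * cnj (\<Sum>i\<in>I. cnj (v i) * \<psi> i)"
      by (simp add: proj_def sum_product mult_ac)
    then show ?thesis
      by (simp only: complex_norm_square)
  qed
  then show ?thesis
    unfolding psd_on_def by simp
qed

lemma clinear_map_zero:
  assumes "clinear_map \<Phi>"
  shows "\<Phi> (\<lambda>i j. 0) = (\<lambda>i j. 0)"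
proof -
  have "\<Phi> (\<lambda>i j. 0) = (\<lambda>i j. 1 * \<Phi> (\<lambda>i j. 0) i j + \<Phi> (\<lambda>i j. 0) i j)"
    using assms[unfolded clinear_map_def, rule_format, of 1 "\<lambda>i j. 0" "\<lambda>i j. 0"] by simp
  then show ?thesis
    by (metis (no_types, lifting) add_cancel_right_right mult_1)
qed

lemma clinear_map_scale:
  assumes "clinear_map \<Phi>"
  shows "\<Phi> (\<lambda>i j. c * X i j) = (\<lambda>i j. c * \<Phi> X i j)"
  using assms[unfolded clinear_map_def, rule_format, of c X "\<lambda>i j. 0"]
  by (simp add: clinear_map_zero[OF assms])

lemma loc_scale:
  "clinear_map \<Phi> \<Longrightarrow> loc \<Phi> (\<lambda>u v. c * X u v) = (\<lambda>u v. c * loc \<Phi> X u v)"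
  by (auto simp: loc_def clinear_map_scale[where X = "\<lambda>i' j'. X (i', _) (j', _)"] fun_eq_iff)

lemma loc_comp: "loc \<Phi> (loc \<Psi> X) = loc (\<lambda>\<rho>. \<Phi> (\<Psi> \<rho>)) X"
  by (auto simp: loc_def fun_eq_iff)

lemma loc_sum: "loc (\<lambda>\<rho> x y. \<Sum>i\<in>A. F i \<rho> x y) X = (\<lambda>u v. \<Sum>i\<in>A. loc (F i) X u v)"
  by (auto simp: loc_def fun_eq_iff)

definition loc_vec :: "'a::finite op \<Rightarrow> ('a \<times> 'b \<Rightarrow> complex) \<Rightarrow> 'a \<times> 'b \<Rightarrow> complex" where
  "loc_vec M \<psi> = (\<lambda>(i, a). \<Sum>k\<in>UNIV. M i k * \<psi> (k, a))"

lemma loc_sandwich_proj: "loc (sandwich M) (proj \<psi>) = proj (loc_vec M \<psi>)"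
  by (auto simp: loc_def loc_vec_def fun_eq_iff sandwich_def mmul_def adj_def proj_def
      sum_distrib_left sum_distrib_right sum_product mult_ac)

lemma mtrace_prod:
  "mtrace (X :: ('a::finite \<times> 'b::finite) op) = (\<Sum>b\<in>UNIV. mtrace (\<lambda>i j. X (i, b) (j, b)))"
proof -
  have "mtrace X = (\<Sum>i\<in>UNIV. \<Sum>b\<in>UNIV. X (i, b) (i, b))"
    unfolding mtrace_def UNIV_Times_UNIV[symmetric] sum.cartesian_product
    by (simp add: case_prod_beta)
  also have "\<dots> = (\<Sum>b\<in>UNIV. \<Sum>i\<in>UNIV. X (i, b) (i, b))"
    by (rule sum.swap)
  finally show ?thesis
    by (simp add: mtrace_def)
qed

lemma mtrace_loc:
  fixes \<Phi> :: "'a::finite op \<Rightarrow> 'a op" and X :: "('a \<times> 'b::finite) op"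
  assumes "trace_preserving \<Phi>"
  shows "mtrace (loc \<Phi> X) = mtrace X"
  using assms unfolding mtrace_prod[of "loc \<Phi> X"] mtrace_prod[of X] trace_preserving_def
  by (simp add: loc_def)


lemma psd_on_reindex:
  assumes "inj_on h A"
  shows "psd_on (h ` A) X \<longleftrightarrow> psd_on A (\<lambda>u v. X (h u) (h v))"
proof -
  have quad: "(\<Sum>i\<in>h ` A. \<Sum>j\<in>h ` A. cnj (w i) * X i j * w j)
      = (\<Sum>i\<in>A. \<Sum>j\<in>A. cnj (w (h i)) * X (h i) (h j) * w (h j))" for w
    using assms by (simp add: sum.reindex)
  show ?thesis
  proof
    assume psd: "psd_on (h ` A) X"
    show "psd_on A (\<lambda>u v. X (h u) (h v))"
      unfolding psd_on_def
    proof
      fix v :: "'a \<Rightarrow> complex"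
      have "(\<Sum>i\<in>A. \<Sum>j\<in>A. cnj (v i) * X (h i) (h j) * v j)
          = (\<Sum>i\<in>h ` A. \<Sum>j\<in>h ` A. cnj ((v \<circ> inv_into A h) i) * X i j * (v \<circ> inv_into A h) j)"
        unfolding quad using assms by (intro sum.cong refl) simp_all
      then show "Im (\<Sum>i\<in>A. \<Sum>j\<in>A. cnj (v i) * X (h i) (h j) * v j) = 0
          \<and> 0 \<le> Re (\<Sum>i\<in>A. \<Sum>j\<in>A. cnj (v i) * X (h i) (h j) * v j)"
        using psd unfolding psd_on_def by presburger
    qed
  next
    assume psd: "psd_on A (\<lambda>u v. X (h u) (h v))"
    show "psd_on (h ` A) X"
      unfolding psd_on_def quad
      using psd[unfolded psd_on_def, rule_format, of "_ \<circ> h"] by simp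
  qed
qed

text \<open>Complete positivity is phrased with ancillas inside \<open>nat\<close>; a finite ancilla type
  embeds into an initial segment of \<open>nat\<close>.\<close>
lemma psd_loc:
  fixes \<Phi> :: "'a::finite op \<Rightarrow> 'a op" and X :: "('a \<times> 'b::finite) op"
  assumes "completely_positive \<Phi>" and "psd X"
  shows "psd (loc \<Phi> X)"
proof -
  obtain f :: "'b \<Rightarrow> nat" and k where f_img: "f ` UNIV = {..<k}" and "inj f"
    using finite_imp_inj_to_nat_seg[of "UNIV :: 'b set"] by (auto simp: lessThan_def)
  define h :: "'a \<times> 'b \<Rightarrow> 'a \<times> nat" where "h = map_prod id f"
  have h: "inj h" "h ` UNIV = UNIV \<times> {..<k}"
    using \<open>inj f\<close> map_prod_surj_on[of id UNIV UNIV f UNIV "{..<k}"] f_img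
    by (simp_all add: h_def prod.inj_map)
  define X' :: "('a \<times> nat) op" where "X' = (\<lambda>u v. X (inv h u) (inv h v))"
  have "psd_on (UNIV \<times> {..<k}) X'"
    using assms(2) unfolding h(2)[symmetric] psd_on_reindex[OF h(1)]
    by (simp add: X'_def psd_def h(1))
  then have "psd_on (UNIV \<times> {..<k}) (loc \<Phi> X')"
    using assms(1) unfolding completely_positive_def by blast
  moreover have "(\<lambda>u v. loc \<Phi> X' (h u) (h v)) = loc \<Phi> X"
  proof -
    have "inv h (i, f b) = (i, b)" for i b
      using inv_f_f[OF h(1), of "(i, b)"] by (simp add: h_def)
    then show ?thesis
      by (auto simp: X'_def loc_def fun_eq_iff h_def)
  qed
  ultimately show ?thesis
    unfolding h(2)[symmetric] psd_on_reindex[OF h(1)] psd_def by simp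
qed

lemma density_loc:
  fixes \<Phi> :: "'a::finite op \<Rightarrow> 'a op" and X :: "('a \<times> 'b::finite) op"
  assumes "CPT \<Phi>" and "density X"
  shows "density (loc \<Phi> X)"
  using assms psd_loc[of \<Phi> X] mtrace_loc[of \<Phi> X] by (simp add: CPT_def density_def)

definition vec_sqnorm :: "('a::finite \<Rightarrow> complex) \<Rightarrow> real" where
  "vec_sqnorm \<psi> = (\<Sum>x\<in>UNIV. (cmod (\<psi> x))\<^sup>2)"

text \<open>The zero vector is sent to an arbitrary basis vector, so that the result is always a
  unit vector.\<close>
definition vec_normalize :: "('a::finite \<Rightarrow> complex) \<Rightarrow> 'a \<Rightarrow> complex" where
  "vec_normalize \<psi> = (if vec_sqnorm \<psi> = 0 then (\<lambda>x. if x = undefined then 1 else 0)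
     else (\<lambda>x. \<psi> x / of_real (sqrt (vec_sqnorm \<psi>))))"

lemma vec_sqnorm_nonneg: "0 \<le> vec_sqnorm \<psi>"
  by (simp add: vec_sqnorm_def sum_nonneg)

lemma vec_sqnorm_eq_0_iff: "vec_sqnorm \<psi> = 0 \<longleftrightarrow> \<psi> = (\<lambda>x. 0)"
  by (simp add: vec_sqnorm_def sum_nonneg_eq_0_iff fun_eq_iff)

lemma unit_vec_vec_normalize: "unit_vec (vec_normalize \<psi>)"
proof (cases "vec_sqnorm \<psi> = 0")
  case True
  then show ?thesis
    by (simp add: unit_vec_def vec_normalize_def if_distrib[of "\<lambda>z. (cmod z)\<^sup>2"] cong: if_cong)
next
  case False
  then have "(\<Sum>x\<in>UNIV. (cmod (vec_normalize \<psi> x))\<^sup>2) = vec_sqnorm \<psi> / vec_sqnorm \<psi>"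
    using vec_sqnorm_nonneg[of \<psi>]
    by (simp add: vec_normalize_def vec_sqnorm_def norm_divide power_divide flip: sum_divide_distrib)
  then show ?thesis
    using False by (simp add: unit_vec_def)
qed

lemma proj_vec_normalize:
  "proj \<psi> = (\<lambda>x y. of_real (vec_sqnorm \<psi>) * proj (vec_normalize \<psi>) x y)"
proof (cases "vec_sqnorm \<psi> = 0")
  case True
  then show ?thesis
    unfolding vec_sqnorm_eq_0_iff by (simp add: proj_def vec_sqnorm_def)
next
  case False
  have "of_real (sqrt (vec_sqnorm \<psi>)) * of_real (sqrt (vec_sqnorm \<psi>))
      = complex_of_real (vec_sqnorm \<psi>)"
    using vec_sqnorm_nonneg[of \<psi>] by (simp flip: of_real_mult)
  then show ?thesis
    using False by (auto simp: proj_def vec_normalize_def fun_eq_iff)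
qed

lemma mtrace_proj: "mtrace (proj \<psi>) = of_real (vec_sqnorm \<psi>)"
  unfolding mtrace_def proj_def vec_sqnorm_def by (simp only: of_real_sum complex_norm_square)

lemma density_proj: "unit_vec \<psi> \<Longrightarrow> density (proj \<psi>)"
  by (simp add: density_def psd_def psd_on_proj mtrace_proj unit_vec_def vec_sqnorm_def)

lemma unit_vec_phi_plus: "unit_vec (phi_plus :: 'a::finite \<times> 'a \<Rightarrow> complex)"
proof -
  let ?d = "real (card (UNIV :: 'a set))"
  have "(\<Sum>a\<in>UNIV. (cmod (phi_plus (j, a)))\<^sup>2) = 1 / ?d" for j :: 'a
    by (simp add: phi_plus_def if_distrib[of "\<lambda>z. (cmod z)\<^sup>2"] norm_divide power_divide
        cong: if_cong)
  then have "(\<Sum>u\<in>UNIV \<times> UNIV. (cmod (phi_plus (u :: 'a \<times> 'a)))\<^sup>2) = ?d * (1 / ?d)"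
    unfolding sum.cartesian_product' by simp
  then show ?thesis
    by (simp add: unit_vec_def)
qed

lemma density_choi: "CPT \<E> \<Longrightarrow> density (choi \<E>)"
  unfolding choi_def by (rule density_loc[OF _ density_proj[OF unit_vec_phi_plus]])

definition mixture :: "(nat \<Rightarrow> real) \<Rightarrow> (nat \<Rightarrow> 'a op) \<Rightarrow> nat \<Rightarrow> 'a op" where
  "mixture p \<sigma> n = (\<lambda>x y. \<Sum>i<n. of_real (p i) * \<sigma> i x y)"

definition scale_decomp :: "real \<Rightarrow> (real \<times> ('a \<Rightarrow> complex)) list \<Rightarrow> (real \<times> ('a \<Rightarrow> complex)) list"
  where "scale_decomp c D = map (\<lambda>(q, \<psi>). (c * q, \<psi>)) D"

definition mix_decomp :: "(nat \<Rightarrow> real) \<Rightarrow> (nat \<Rightarrow> (real \<times> ('a \<Rightarrow> complex)) list) \<Rightarrow> nat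
    \<Rightarrow> (real \<times> ('a \<Rightarrow> complex)) list" where
  "mix_decomp p D n = concat (map (\<lambda>i. scale_decomp (p i) (D i)) [0..<n])"

lemma mtrace_mixture: "mtrace (mixture p \<sigma> n) = (\<Sum>i<n. of_real (p i) * mtrace (\<sigma> i))"
  unfolding mixture_def mtrace_def by (simp add: sum.swap[of _ UNIV] sum_distrib_left)

lemma sum_list_map_mix_decomp:
  "sum_list (map g (mix_decomp p D n)) = (\<Sum>i<n. sum_list (map g (scale_decomp (p i) (D i))))"
  by (induction n) (simp_all add: mix_decomp_def)

lemma sum_list_map_scale_decomp:
  fixes g :: "real \<Rightarrow> ('a \<Rightarrow> complex) \<Rightarrow> 'b::real_algebra_1"
  assumes "\<And>q \<psi>. g (c * q) \<psi> = of_real c * g q \<psi>"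
  shows "sum_list (map (\<lambda>(q, \<psi>). g q \<psi>) (scale_decomp c D))
    = of_real c * sum_list (map (\<lambda>(q, \<psi>). g q \<psi>) D)"
  using assms by (induction D) (auto simp: scale_decomp_def algebra_simps)

lemma avg_ent_mix_decomp: "avg_ent E (mix_decomp p D n) = (\<Sum>i<n. p i * avg_ent E (D i))"
  unfolding avg_ent_def sum_list_map_mix_decomp
  by (subst sum_list_map_scale_decomp) simp_all

lemma pure_decomp_mix_decomp:
  assumes "\<And>i. i < n \<Longrightarrow> 0 \<le> p i \<and> pure_decomp (\<sigma> i) (D i)" and "(\<Sum>i<n. p i) = 1"
  shows "pure_decomp (mixture p \<sigma> n) (mix_decomp p D n)"
  unfolding pure_decomp_def
proof (intro conjI)
  show "\<forall>(q, \<psi>)\<in>set (mix_decomp p D n). 0 \<le> q \<and> unit_vec \<psi>"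
    using assms(1) by (fastforce simp: mix_decomp_def scale_decomp_def pure_decomp_def)
  have "sum_list (map fst (mix_decomp p D n)) = (\<Sum>i<n. p i * sum_list (map fst (D i)))"
    unfolding sum_list_map_mix_decomp fst_def
    by (subst sum_list_map_scale_decomp[where g = "\<lambda>q \<psi>. q"]) simp_all
  then show "sum_list (map fst (mix_decomp p D n)) = 1"
    using assms by (simp add: pure_decomp_def)
  show "mixture p \<sigma> n = (\<lambda>x y. \<Sum>(q, \<psi>)\<leftarrow>mix_decomp p D n. of_real q * proj \<psi> x y)"
    using assms(1) unfolding mixture_def sum_list_map_mix_decomp
    by (subst sum_list_map_scale_decomp) (simp_all add: pure_decomp_def)
qed

lemma pure_decomp_proj: "unit_vec \<psi> \<Longrightarrow> pure_decomp (proj \<psi>) [(1, \<psi>)]"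
  by (simp add: pure_decomp_def)

lemma ent_le_avg_ent:
  "ent_measure E \<Longrightarrow> density \<rho> \<Longrightarrow> pure_decomp \<rho> D \<Longrightarrow> E \<rho> \<le> avg_ent E D"
  unfolding ent_measure_def by blast

lemma ent_eq_avg_ent_optimal:
  assumes "ent_measure E" and "density \<rho>"
  obtains D where "pure_decomp \<rho> D" and "E \<rho> = avg_ent E D"
  using assms unfolding ent_measure_def by blast

lemma ent_loc_le:
  "ent_measure E \<Longrightarrow> density \<rho> \<Longrightarrow> CPT \<Lambda> \<Longrightarrow> E (loc \<Lambda> \<rho>) \<le> E \<rho>"
  unfolding ent_measure_def by blast

text \<open>A convex roof is convex: glue optimal decompositions of the \<open>\<sigma> i\<close>.\<close>
lemma ent_mixture_le:
  assumes E: "ent_measure E" and "density (mixture p \<sigma> n)"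
    and "\<And>i. i < n \<Longrightarrow> 0 \<le> p i \<and> density (\<sigma> i)" and "(\<Sum>i<n. p i) = 1"
  shows "E (mixture p \<sigma> n) \<le> (\<Sum>i<n. p i * E (\<sigma> i))"
proof -
  have "\<forall>i. \<exists>D. i < n \<longrightarrow> pure_decomp (\<sigma> i) D \<and> E (\<sigma> i) = avg_ent E D"
    using ent_eq_avg_ent_optimal[OF E] assms(3) by metis
  then obtain D where D: "\<And>i. i < n \<Longrightarrow> pure_decomp (\<sigma> i) (D i) \<and> E (\<sigma> i) = avg_ent E (D i)"
    by metis
  have "E (mixture p \<sigma> n) \<le> avg_ent E (mix_decomp p D n)"
    using assms D by (intro ent_le_avg_ent pure_decomp_mix_decomp) simp_all
  also have "\<dots> = (\<Sum>i<n. p i * E (\<sigma> i))"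
    using D by (simp add: avg_ent_mix_decomp)
  finally show ?thesis .
qed

lemma avg_ent_le_ent_assist: "pure_decomp \<chi> D \<Longrightarrow> ereal (avg_ent E D) \<le> ent_assist E \<chi>"
  unfolding ent_assist_def by (rule SUP_upper) simp

text \<open>The weight \<open>p\<close> and unit vector \<open>\<psi>\<close> with \<open>(M \<otimes> 1) \<phi>\<^sup>+ = \<surd>p \<psi>\<close>, as in the
  header.\<close>
definition kraus_weight :: "'a::finite op \<Rightarrow> real" where
  "kraus_weight M = vec_sqnorm (loc_vec M phi_plus)"

definition kraus_state :: "'a::finite op \<Rightarrow> 'a \<times> 'a \<Rightarrow> complex" where
  "kraus_state M = vec_normalize (loc_vec M phi_plus)"

lemma kraus_weight_nonneg: "0 \<le> kraus_weight M"
  by (simp add: kraus_weight_def vec_sqnorm_nonneg)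

lemma unit_vec_kraus_state: "unit_vec (kraus_state M)"
  by (simp add: kraus_state_def unit_vec_vec_normalize)

lemma proj_loc_vec_phi_plus:
  "proj (loc_vec M phi_plus) = (\<lambda>x y. of_real (kraus_weight M) * proj (kraus_state M) x y)"
  unfolding kraus_weight_def kraus_state_def by (rule proj_vec_normalize)

lemma choi_kraus_decomp:
  assumes "kraus_decomp \<E> Ms"
  shows "choi \<E>
    = mixture (\<lambda>i. kraus_weight (Ms ! i)) (\<lambda>i. proj (kraus_state (Ms ! i))) (length Ms)"
proof -
  have \<E>: "\<E> = (\<lambda>\<rho> x y. \<Sum>i<length Ms. sandwich (Ms ! i) \<rho> x y)"
    using assms unfolding kraus_decomp_def by blast
  show ?thesis
    unfolding choi_def \<E> loc_sum loc_sandwich_proj proj_loc_vec_phi_plus mixture_def ..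
qed

lemma sum_kraus_weight:
  assumes "CPT \<E>" and "kraus_decomp \<E> Ms"
  shows "(\<Sum>i<length Ms. kraus_weight (Ms ! i)) = 1"
proof -
  have "mtrace (choi \<E>) = 1"
    using density_choi[OF assms(1)] by (simp add: density_def)
  moreover have tr: "mtrace (proj (kraus_state M)) = 1" for M
    using density_proj[OF unit_vec_kraus_state] unfolding density_def by blast
  ultimately have "of_real (\<Sum>i<length Ms. kraus_weight (Ms ! i)) = (1 :: complex)"
    by (simp add: choi_kraus_decomp[OF assms(2)] mtrace_mixture tr)
  then show ?thesis
    by (metis of_real_eq_1_iff)
qed

lemma choi_classical_memory:
  assumes "\<And>i. i < length Ms \<Longrightarrow> clinear_map (\<Phi>s ! i)"
    and "\<forall>\<rho>. \<E> \<rho> = (\<lambda>x y. \<Sum>i<length Ms. (\<Phi>s ! i) (sandwich (Ms ! i) \<rho>) x y)"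
  shows "choi \<E> = mixture (\<lambda>i. kraus_weight (Ms ! i))
    (\<lambda>i. loc (\<Phi>s ! i) (proj (kraus_state (Ms ! i)))) (length Ms)"
proof -
  have \<E>: "\<E> = (\<lambda>\<rho> x y. \<Sum>i<length Ms. (\<lambda>\<rho>. (\<Phi>s ! i) (sandwich (Ms ! i) \<rho>)) \<rho> x y)"
    using assms(2) by blast
  show ?thesis
    unfolding choi_def \<E> loc_sum loc_comp[symmetric] loc_sandwich_proj proj_loc_vec_phi_plus
      mixture_def
    using assms(1) by (intro ext sum.cong refl) (simp add: loc_scale)
qed

lemma avg_ent_kraus_le_ent_assist:
  assumes "CPT \<E>" and "kraus_decomp \<E> Ms"
  shows "ereal (\<Sum>i<length Ms. kraus_weight (Ms ! i) * E (proj (kraus_state (Ms ! i))))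
    \<le> ent_assist E (choi \<E>)"
proof -
  let ?D = "mix_decomp (\<lambda>i. kraus_weight (Ms ! i)) (\<lambda>i. [(1, kraus_state (Ms ! i))]) (length Ms)"
  have "(\<Sum>i<length Ms. kraus_weight (Ms ! i) * E (proj (kraus_state (Ms ! i)))) = avg_ent E ?D"
    unfolding avg_ent_mix_decomp by (simp add: avg_ent_def)
  also have "ereal \<dots> \<le> ent_assist E (choi \<E>)"
    unfolding choi_kraus_decomp[OF assms(2)]
    by (intro avg_ent_le_ent_assist pure_decomp_mix_decomp)
      (simp_all add: sum_kraus_weight[OF assms] kraus_weight_nonneg pure_decomp_proj
        unit_vec_kraus_state)
  finally show ?thesis .
qed

lemma ent_choi_classical_memory_le:
  assumes E: "ent_measure E" and "CPT \<E>1" and "kraus_decomp \<E>1 Ms" and "CPT \<E>2"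
    and CPT_\<Phi>s: "\<And>i. i < length Ms \<Longrightarrow> CPT (\<Phi>s ! i)"
    and "\<forall>\<rho>. \<E>2 \<rho> = (\<lambda>x y. \<Sum>i<length Ms. (\<Phi>s ! i) (sandwich (Ms ! i) \<rho>) x y)"
  shows "E (choi \<E>2) \<le> (\<Sum>i<length Ms. kraus_weight (Ms ! i) * E (proj (kraus_state (Ms ! i))))"
proof -
  define \<sigma> where "\<sigma> = (\<lambda>i. loc (\<Phi>s ! i) (proj (kraus_state (Ms ! i))))"
  have density_kraus_state: "density (proj (kraus_state M))" for M
    by (rule density_proj[OF unit_vec_kraus_state])
  have choi2: "choi \<E>2 = mixture (\<lambda>i. kraus_weight (Ms ! i)) \<sigma> (length Ms)"
    unfolding \<sigma>_def using CPT_\<Phi>s assms(6) by (intro choi_classical_memory) (simp_all add: CPT_def)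
  have "E (choi \<E>2) \<le> (\<Sum>i<length Ms. kraus_weight (Ms ! i) * E (\<sigma> i))"
    unfolding choi2
    using E density_choi[OF assms(4), unfolded choi2] CPT_\<Phi>s sum_kraus_weight[OF assms(2,3)]
    by (intro ent_mixture_le) (simp_all add: \<sigma>_def density_loc density_kraus_state kraus_weight_nonneg)
  also have "\<dots> \<le> (\<Sum>i<length Ms. kraus_weight (Ms ! i) * E (proj (kraus_state (Ms ! i))))"
    using E CPT_\<Phi>s
    by (intro sum_mono mult_left_mono) (simp_all add: \<sigma>_def ent_loc_le density_kraus_state kraus_weight_nonneg)
  finally show ?thesis .
qed

theorem theorem1:
  fixes \<E>1 \<E>2 :: "'n::finite op \<Rightarrow> 'n op"
    and E :: "('n \<times> 'n) op \<Rightarrow> real"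
  assumes "CPT \<E>1" and "CPT \<E>2"
    and "ent_measure E"
    and "ent_assist E (choi \<E>1) < ereal (E (choi \<E>2))"
  shows "\<not> classical_memory \<E>1 \<E>2"
proof
  assume "classical_memory \<E>1 \<E>2"
  then obtain Ms and \<Phi>s :: "('n op \<Rightarrow> 'n op) list" where
    kraus: "kraus_decomp \<E>1 Ms" and "length \<Phi>s = length Ms" and "\<forall>\<Phi>\<in>set \<Phi>s. CPT \<Phi>"
    and \<E>2: "\<forall>\<rho>. \<E>2 \<rho> = (\<lambda>x y. \<Sum>i<length Ms. (\<Phi>s ! i) (sandwich (Ms ! i) \<rho>) x y)"
    unfolding classical_memory_def by blast
  then have "CPT (\<Phi>s ! i)" if "i < length Ms" for i
    using that by simp
  then have "ereal (E (choi \<E>2))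
      \<le> ereal (\<Sum>i<length Ms. kraus_weight (Ms ! i) * E (proj (kraus_state (Ms ! i))))"
    using ent_choi_classical_memory_le[OF assms(3,1) kraus assms(2) _ \<E>2] by simp
  also have "\<dots> \<le> ent_assist E (choi \<E>1)"
    by (rule avg_ent_kraus_le_ent_assist[OF assms(1) kraus])
  finally show False
    using assms(4) by simp
qed

end
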